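(* Let $P$ be a connected positroid on $[n]$ and let $I\subseteq[n]$ be a cyclic interval. Then each connected component of $P|_I$ is a cyclic interval.
   Context: A positroid of rank $k$ on $[n]$ is the matroid of a real $k\times n$ matrix of rank $k$ all of whose maximal minors are nonnegative. A cyclic interval is a set $\{a,a+1,\dots,b\}$ with indices modulo $n$. A matroid is connected if it is not a direct sum of two matroids on nonempty ground sets; connected components are the ground sets of the summands in the decomposition into connected matroids. *)

theory Defs
  imports "Jordan_Normal_Form.DL_Rank" "Jordan_Normal_Form.Determinant"
begin

(* Ground set [n] is modelled as {0..<n}; indices are taken modulo n. *)

(* A matroid on ground set E is given by its family of independent sets. *)

definition max_minor :: "real mat \<Rightarrow> nat set \<Rightarrow> real" where
  "max_minor A S = det (mat (dim_row A) (dim_row A)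
      (\<lambda>(i, j). A $$ (i, sorted_list_of_set S ! j)))"

definition matrix_bases :: "real mat \<Rightarrow> nat set set" where
  "matrix_bases A = {B. B \<subseteq> {0..<dim_col A} \<and> card B = dim_row A \<and> max_minor A B \<noteq> 0}"

definition matrix_matroid :: "real mat \<Rightarrow> nat set set" where
  "matrix_matroid A = {X. \<exists>B \<in> matrix_bases A. X \<subseteq> B}"

definition positroid :: "nat \<Rightarrow> nat set set \<Rightarrow> bool" where
  "positroid n P \<longleftrightarrow> (\<exists>k (A :: real mat). A \<in> carrier_mat k n \<and> vec_space.rank k A = k \<and>
      (\<forall>S. S \<subseteq> {0..<n} \<and> card S = k \<longrightarrow> max_minor A S \<ge> 0) \<and>
      P = matrix_matroid A)"

definition restr :: "nat set set \<Rightarrow> nat set \<Rightarrow> nat set set" where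
  "restr M S = {X \<in> M. X \<subseteq> S}"

(* M on E equals the direct sum M|S \<oplus> M|(E-S) *)
definition separator :: "nat set \<Rightarrow> nat set set \<Rightarrow> nat set \<Rightarrow> bool" where
  "separator E M S \<longleftrightarrow> S \<subseteq> E \<and>
     (\<forall>X. X \<subseteq> E \<longrightarrow> (X \<in> M \<longleftrightarrow> X \<inter> S \<in> M \<and> X - S \<in> M))"

definition matroid_connected :: "nat set \<Rightarrow> nat set set \<Rightarrow> bool" where
  "matroid_connected E M \<longleftrightarrow> \<not> (\<exists>S. S \<noteq> {} \<and> S \<subset> E \<and> separator E M S)"

definition connected_component :: "nat set \<Rightarrow> nat set set \<Rightarrow> nat set \<Rightarrow> bool" where
  "connected_component E M C \<longleftrightarrow> C \<noteq> {} \<and> separator E M C \<and> matroid_connected C (restr M C)"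

(* cyclic interval {a, a+1, ..., b} mod n inside {0..<n} (empty and full set included) *)
definition cyclic_interval :: "nat \<Rightarrow> nat set \<Rightarrow> bool" where
  "cyclic_interval n S \<longleftrightarrow> (\<exists>a < n. \<exists>m \<le> n. S = {(a + i) mod n | i. i < m})"

end

theory Submission
  imports Defs
begin

(*
  Realise the positroid by a k x n matrix A with nonnegative maximal minors and suppose a component
  C of P|I is not a cyclic interval. Reading I in cyclic order, some t in I - C lies between two
  elements of C. As C is connected, the elements of C before t do not separate P|C, so C has a
  basis BC with some x in BC before t and some z in C after t whose expansion in BC uses x. Let S
  be the elements of I - C strictly between x and z; a basis BS of S together with BC extends to a
  basis B of P. For d outside the cyclic arc from x to z and b in BS, the Grassmann-Pluecker
  relation for the minors of (B - {x, b}) plus two of x, b, z, d has two terms of opposite sign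
  which are both nonnegative, so both vanish and d has no b-coordinate. Hence everything outside S
  is spanned by B - BS, everything in S by BS, and S is a proper nonempty separator of P.
*)

section \<open>Determinants of selected columns\<close>

definition col_det :: "real mat \<Rightarrow> nat list \<Rightarrow> real" where
  "col_det A xs = det (mat (dim_row A) (dim_row A) (\<lambda>(i, j). A $$ (i, xs ! j)))"

lemma max_minor_col_det: "max_minor A S = col_det A (sorted_list_of_set S)"
  unfolding max_minor_def col_det_def ..

lemma col_det_swap:
  assumes "length ys + 2 + length zs = dim_row A"
  shows "col_det A (ys @ p # q # zs) = - col_det A (ys @ q # p # zs)"
proof -
  let ?k = "dim_row A"
  let ?M = "mat ?k ?k (\<lambda>(i, j). A $$ (i, (ys @ q # p # zs) ! j))"
  have "swapcols (length ys) (Suc (length ys)) ?M = mat ?k ?k (\<lambda>(i, j). A $$ (i, (ys @ p # q # zs) ! j))"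
    by (rule eq_matI) (use assms in \<open>auto simp: nth_append\<close>)
  moreover have "det (swapcols (length ys) (Suc (length ys)) ?M) = - det ?M"
    by (rule det_swapcols[where n = ?k]) (use assms in auto)
  ultimately show ?thesis
    unfolding col_det_def by simp
qed

lemma col_det_move:
  assumes "length (ys @ t # zs @ ws) = dim_row A"
  shows "col_det A (ys @ t # zs @ ws) = (-1) ^ length zs * col_det A (ys @ zs @ t # ws)"
  using assms
proof (induction zs arbitrary: ys)
  case Nil
  then show ?case by simp
next
  case (Cons w zs)
  have "col_det A (ys @ t # (w # zs) @ ws) = - col_det A ((ys @ [w]) @ t # zs @ ws)"
    using col_det_swap[of ys "zs @ ws" A t w] Cons.prems by simp
  also have "\<dots> = - ((-1) ^ length zs * col_det A ((ys @ [w]) @ zs @ t # ws))"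
    using Cons.IH[of "ys @ [w]"] Cons.prems by simp
  finally show ?case by simp
qed

lemma col_det_insort:
  assumes "sorted xs" "distinct xs" "t \<notin> set xs" "Suc (length (ys @ xs @ ws)) = dim_row A"
  shows "col_det A (ys @ insort t xs @ ws) =
    (-1) ^ length (filter (\<lambda>x. t < x) xs) * col_det A (ys @ xs @ t # ws)"
  using assms
proof (induction xs arbitrary: ys)
  case Nil
  then show ?case by simp
next
  case (Cons y xs)
  show ?case
  proof (cases "t \<le> y")
    case True
    with Cons.prems have "\<forall>x \<in> set (y # xs). t < x"
      by auto
    then show ?thesis
      using True col_det_move[of ys t "y # xs" ws A] Cons.prems by simp
  next
    case False
    then show ?thesis
      using Cons.IH[of "ys @ [y]"] Cons.prems by auto
  qed
qed

lemma col_det_insert: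
  assumes "finite X" "t \<notin> X" "Suc (card X + length ws) = dim_row A"
  shows "col_det A (sorted_list_of_set (insert t X) @ ws) =
    (-1) ^ card {x \<in> X. t < x} * col_det A (sorted_list_of_set X @ t # ws)"
proof -
  have "length (filter (\<lambda>x. t < x) (sorted_list_of_set X)) = card {x \<in> X. t < x}"
    using distinct_length_filter[of "sorted_list_of_set X"] assms(1)
    by (simp add: Int_commute Collect_conj_eq)
  then show ?thesis
    using col_det_insort[of "sorted_list_of_set X" t "[]" ws A] assms
    by (simp add: sorted_list_of_set_insert)
qed

lemma bij_betw_nth_sorted_list_of_set:
  "finite K \<Longrightarrow> bij_betw ((!) (sorted_list_of_set K)) {0..<card K} K"
  by (rule bij_betw_nth) auto

lemma sum_over_sorted_list_of_set:
  "finite K \<Longrightarrow> (\<Sum>e\<in>K. f e) = (\<Sum>j<card K. f (sorted_list_of_set K ! j))"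
  using sum.reindex_bij_betw[OF bij_betw_nth_sorted_list_of_set, of K f]
  by (simp add: atLeast0LessThan)

lemma cofactor_replace_col:
  assumes "l < k"
  shows "cofactor (mat k k (\<lambda>(i, j). if j = l then u i else F i j)) i l =
    cofactor (mat k k (\<lambda>(i, j). if j = l then u' i else F i j)) i l"
proof -
  have "mat_delete (mat k k (\<lambda>(i, j). if j = l then u i else F i j)) i l =
      mat_delete (mat k k (\<lambda>(i, j). if j = l then u' i else F i j)) i l"
    by (rule eq_matI) (auto simp: mat_delete_def)
  then show ?thesis
    unfolding cofactor_def by simp
qed

lemma det_col_sum:
  fixes F :: "nat \<Rightarrow> nat \<Rightarrow> real"
  assumes "l < k"
  shows "det (mat k k (\<lambda>(i, j). if j = l then (\<Sum>y\<in>Y. a y * f y i) else F i j)) =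
    (\<Sum>y\<in>Y. a y * det (mat k k (\<lambda>(i, j). if j = l then f y i else F i j)))"
proof -
  define cf where "cf i = cofactor (mat k k (\<lambda>(i, j). if j = l then 0 else F i j)) i l" for i
  have expand: "det (mat k k (\<lambda>(i, j). if j = l then u i else F i j)) = (\<Sum>i<k. u i * cf i)" for u
  proof -
    have "det (mat k k (\<lambda>(i, j). if j = l then u i else F i j)) =
      (\<Sum>i<k. (mat k k (\<lambda>(i, j). if j = l then u i else F i j)) $$ (i, l) *
          cofactor (mat k k (\<lambda>(i, j). if j = l then u i else F i j)) i l)"
      by (rule laplace_expansion_column[OF _ assms]) simp
    also have "\<dots> = (\<Sum>i<k. u i * cf i)"
      by (rule sum.cong) (use assms in \<open>auto simp: cf_def intro: cofactor_replace_col\<close>)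
    finally show ?thesis .
  qed
  have "(\<Sum>i<k. (\<Sum>y\<in>Y. a y * f y i) * cf i) = (\<Sum>y\<in>Y. a y * (\<Sum>i<k. f y i * cf i))"
    by (simp add: sum_distrib_right sum_distrib_left mult.assoc sum.swap[of _ Y])
  then show ?thesis
    by (simp add: expand)
qed

(* the sign of the permutation sorting the list (sorted X) @ [p, q] *)
definition pair_sign :: "nat set \<Rightarrow> nat \<Rightarrow> nat \<Rightarrow> real" where
  "pair_sign X p q = (-1) ^ (card {y \<in> X. p < y} + card {y \<in> X. q < y} + (if q < p then 1 else 0))"

lemma pair_sign_exchange:
  assumes "even ((if b < x then 1 else 0) + (if d < z then 1 else 0) + (if d < x then 1 else 0)
    + (if z < b then 1 else 0 :: nat))"
  shows "pair_sign X x b * pair_sign X z d = pair_sign X x d * pair_sign X b z"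
  using assms unfolding pair_sign_def power_add[symmetric] minus_one_power_iff
  by (simp split: if_splits; presburger)

section \<open>Cyclic order\<close>

definition cyc_offset :: "nat \<Rightarrow> nat \<Rightarrow> nat \<Rightarrow> nat" where
  "cyc_offset a n e = (e + n - a) mod n"

lemma cyc_offset_eq: "a < n \<Longrightarrow> e < n \<Longrightarrow> cyc_offset a n e = (if a \<le> e then e - a else e + n - a)"
  unfolding cyc_offset_def by (auto simp: mod_if)

lemma cyc_offset_add_mod: "a < n \<Longrightarrow> i < n \<Longrightarrow> cyc_offset a n ((a + i) mod n) = i"
  by (auto simp: cyc_offset_eq mod_if)

lemma add_cyc_offset_mod: "a < n \<Longrightarrow> e < n \<Longrightarrow> (a + cyc_offset a n e) mod n = e"
  by (auto simp: cyc_offset_eq mod_if)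

lemma cyc_offset_inj: "a < n \<Longrightarrow> e < n \<Longrightarrow> e' < n \<Longrightarrow> cyc_offset a n e = cyc_offset a n e' \<Longrightarrow> e = e'"
  by (metis add_cyc_offset_mod)

lemma cyclic_intervalE:
  assumes "cyclic_interval n I"
  obtains a m where "a < n" "I = {e. e < n \<and> cyc_offset a n e < m}"
proof -
  obtain a m where a: "a < n" "m \<le> n" "I = {(a + i) mod n | i. i < m}"
    using assms unfolding cyclic_interval_def by blast
  have "I = {e. e < n \<and> cyc_offset a n e < m}"
  proof (intro equalityI subsetI)
    fix e
    assume "e \<in> I"
    then obtain i where "i < m" "e = (a + i) mod n"
      using a(3) by blast
    then show "e \<in> {e. e < n \<and> cyc_offset a n e < m}"
      using a(1,2) cyc_offset_add_mod[OF a(1), of i] by simp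
  next
    fix e
    assume "e \<in> {e. e < n \<and> cyc_offset a n e < m}"
    then show "e \<in> I"
      using a(3) add_cyc_offset_mod[OF a(1), of e] by force
  qed
  with a show ?thesis
    using that by blast
qed

lemma cyclic_interval_offset_range:
  assumes "a < n" "p0 \<le> p1" "p1 < n"
  shows "cyclic_interval n {e. e < n \<and> p0 \<le> cyc_offset a n e \<and> cyc_offset a n e \<le> p1}"
proof -
  let ?a = "(a + p0) mod n"
  have shift: "(?a + i) mod n = (a + (p0 + i)) mod n" for i
    by (simp add: mod_add_left_eq add.assoc)
  have "{e. e < n \<and> p0 \<le> cyc_offset a n e \<and> cyc_offset a n e \<le> p1} =
      {(?a + i) mod n | i. i < p1 - p0 + 1}"
  proof (intro equalityI subsetI)
    fix e
    assume e: "e \<in> {e. e < n \<and> p0 \<le> cyc_offset a n e \<and> cyc_offset a n e \<le> p1}"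
    then have "e = (a + (p0 + (cyc_offset a n e - p0))) mod n"
      using add_cyc_offset_mod[OF assms(1)] by simp
    then have "e = (?a + (cyc_offset a n e - p0)) mod n"
      by (simp only: shift)
    moreover have "cyc_offset a n e - p0 < p1 - p0 + 1"
      using e by auto
    ultimately show "e \<in> {(?a + i) mod n | i. i < p1 - p0 + 1}"
      by blast
  next
    fix e
    assume "e \<in> {(?a + i) mod n | i. i < p1 - p0 + 1}"
    then obtain i where "i < p1 - p0 + 1" "e = (a + (p0 + i)) mod n"
      by (auto simp: shift)
    then show "e \<in> {e. e < n \<and> p0 \<le> cyc_offset a n e \<and> cyc_offset a n e \<le> p1}"
      using assms cyc_offset_add_mod[OF assms(1), of "p0 + i"] by simp
  qed
  moreover have "?a < n" "p1 - p0 + 1 \<le> n"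
    using assms by auto
  ultimately show ?thesis
    unfolding cyclic_interval_def by blast
qed

lemma cyclic_interval_if_gapless:
  assumes "a < n" "C \<subseteq> {0..<n}" "C \<noteq> {}"
    and gapless: "\<And>t x z. t < n \<Longrightarrow> x \<in> C \<Longrightarrow> z \<in> C \<Longrightarrow>
      cyc_offset a n x < cyc_offset a n t \<Longrightarrow> cyc_offset a n t < cyc_offset a n z \<Longrightarrow> t \<in> C"
  shows "cyclic_interval n C"
proof -
  let ?p = "cyc_offset a n"
  have fin: "finite (?p ` C)"
    using assms(2) finite_subset by blast
  obtain x where x: "x \<in> C" "?p x = Min (?p ` C)"
    using Min_in[OF fin] assms(3) by (metis (no_types, lifting) empty_is_image imageE)
  obtain z where z: "z \<in> C" "?p z = Max (?p ` C)"
    using Max_in[OF fin] assms(3) by (metis (no_types, lifting) empty_is_image imageE)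
  have "C = {e. e < n \<and> ?p x \<le> ?p e \<and> ?p e \<le> ?p z}"
  proof (intro equalityI subsetI)
    fix e
    assume "e \<in> C"
    then show "e \<in> {e. e < n \<and> ?p x \<le> ?p e \<and> ?p e \<le> ?p z}"
      using assms(2) fin x(2) z(2) by auto
  next
    fix e
    assume e: "e \<in> {e. e < n \<and> ?p x \<le> ?p e \<and> ?p e \<le> ?p z}"
    have in_n: "x < n" "z < n" "e < n"
      using e x(1) z(1) assms(2) by auto
    consider "?p e = ?p x" | "?p e = ?p z" | "?p x < ?p e" "?p e < ?p z"
      using e by fastforce
    then show "e \<in> C"
    proof cases
      case 1
      then show ?thesis
        using cyc_offset_inj[OF assms(1) in_n(3,1)] x(1) by simp
    next
      case 2
      then show ?thesis
        using cyc_offset_inj[OF assms(1) in_n(3,2)] z(1) by simp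
    next
      case 3
      then show ?thesis
        using gapless[OF in_n(3) x(1) z(1)] by simp
    qed
  qed
  moreover have "?p x \<le> ?p z"
    using Min_le[OF fin imageI[OF z(1)]] x(2) by simp
  moreover have "?p z < n"
    using assms(1) by (simp add: cyc_offset_def)
  ultimately show ?thesis
    using cyclic_interval_offset_range[OF assms(1)] by simp
qed

lemma gap_if_not_cyclic_interval:
  assumes "a < n" "C \<subseteq> {0..<n}" "C \<noteq> {}" "\<not> cyclic_interval n C"
  obtains t x z where "t < n" "t \<notin> C" "x \<in> C" "cyc_offset a n x < cyc_offset a n t"
    "z \<in> C" "cyc_offset a n t < cyc_offset a n z"
  using cyclic_interval_if_gapless[OF assms(1-3)] assms(4) by blast

(* this parity is what makes pair_sign X x b * pair_sign X z d = pair_sign X x d * pair_sign X b z *)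
lemma cyc_offset_order_parity:
  assumes "x < n" "b < n" "z < n" "d < n" "a < n"
    and "cyc_offset a n x < cyc_offset a n b" "cyc_offset a n b < cyc_offset a n z"
    and "cyc_offset a n d < cyc_offset a n x \<or> cyc_offset a n z < cyc_offset a n d"
  shows "even ((if b < x then 1 else 0) + (if d < z then 1 else 0) + (if d < x then 1 else 0)
    + (if z < b then 1 else 0 :: nat))"
  using assms by (auto simp: cyc_offset_eq split: if_splits)

section \<open>Linear algebra of the columns\<close>

locale column_family =
  fixes A :: "real mat" and k n :: nat
  assumes A_carrier: "A \<in> carrier_mat k n"
begin

(* Columns are functions of the row index, zero beyond row k. Columns may repeat, so independence
   is a property of sets of column indices rather than of sets of vectors. *)
definition column :: "nat \<Rightarrow> nat \<Rightarrow> real" where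
  "column e = (\<lambda>i. if i < k then A $$ (i, e) else 0)"

definition lincomb :: "(nat \<Rightarrow> real) \<Rightarrow> nat set \<Rightarrow> nat \<Rightarrow> real" where
  "lincomb c X = (\<lambda>i. \<Sum>e\<in>X. c e * column e i)"

definition indep :: "nat set \<Rightarrow> bool" where
  "indep X \<longleftrightarrow> finite X \<and> (\<forall>c. lincomb c X = (\<lambda>_. 0) \<longrightarrow> (\<forall>e\<in>X. c e = 0))"

definition in_span :: "(nat \<Rightarrow> real) \<Rightarrow> nat set \<Rightarrow> bool" where
  "in_span v X \<longleftrightarrow> (\<exists>c. v = lincomb c X)"

lemma lincomb_cong: "(\<And>e. e \<in> X \<Longrightarrow> c e = c' e) \<Longrightarrow> lincomb c X = lincomb c' X"
  unfolding lincomb_def by (auto intro!: sum.cong)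

lemma lincomb_Un:
  "finite X \<Longrightarrow> finite Y \<Longrightarrow> X \<inter> Y = {} \<Longrightarrow> lincomb c (X \<union> Y) i = lincomb c X i + lincomb c Y i"
  unfolding lincomb_def by (simp add: sum.union_disjoint)

lemma lincomb_extend:
  assumes "finite X" "Y \<subseteq> X"
  shows "lincomb (\<lambda>e. if e \<in> Y then c e else 0) X = lincomb c Y"
proof
  fix i
  have "(\<Sum>e\<in>X. (if e \<in> Y then c e else 0) * column e i) =
      (\<Sum>e\<in>X. if e \<in> Y then c e * column e i else 0)"
    by (rule sum.cong) auto
  also have "\<dots> = (\<Sum>e\<in>X \<inter> Y. c e * column e i)"
    using sum.inter_restrict[OF assms(1), of "\<lambda>e. c e * column e i" Y] by simp
  also have "X \<inter> Y = Y"
    using assms(2) by auto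
  finally show "lincomb (\<lambda>e. if e \<in> Y then c e else 0) X i = lincomb c Y i"
    unfolding lincomb_def .
qed

lemma lincomb_diff_zero_coeffs:
  assumes "finite X" "\<forall>e\<in>Y. c e = 0" "Y \<subseteq> X"
  shows "lincomb c X = lincomb c (X - Y)"
proof -
  have "lincomb c X = lincomb (\<lambda>e. if e \<in> X - Y then c e else 0) X"
    using assms by (intro lincomb_cong) auto
  also have "\<dots> = lincomb c (X - Y)"
    using lincomb_extend[OF assms(1), of "X - Y" c] by simp
  finally show ?thesis .
qed

lemma lincomb_indicator:
  assumes "finite X" "e \<in> X"
  shows "lincomb (\<lambda>y. if y = e then 1 else 0) X = column e"
proof
  fix i
  have "lincomb (\<lambda>y. if y = e then 1 else 0) X i = (\<Sum>y\<in>X. if y = e then column y i else 0)"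
    unfolding lincomb_def by (rule sum.cong) auto
  then show "lincomb (\<lambda>y. if y = e then 1 else 0) X i = column e i"
    using assms by (simp add: sum.delta')
qed

lemma indep_finite: "indep X \<Longrightarrow> finite X"
  unfolding indep_def by auto

lemma indep_empty: "indep {}"
  unfolding indep_def by simp

lemma indep_subset:
  assumes "indep X" "Y \<subseteq> X"
  shows "indep Y"
  unfolding indep_def
proof (intro conjI allI impI ballI)
  show "finite Y"
    using assms finite_subset indep_finite by blast
  fix c e
  assume "lincomb c Y = (\<lambda>_. 0)" "e \<in> Y"
  then have "lincomb (\<lambda>e. if e \<in> Y then c e else 0) X = (\<lambda>_. 0)"
    using lincomb_extend[of X Y c] assms indep_finite by auto
  then have "(if e \<in> Y then c e else 0) = 0"
    using assms \<open>e \<in> Y\<close> unfolding indep_def by blast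
  then show "c e = 0"
    using \<open>e \<in> Y\<close> by simp
qed

lemma indep_lincomb_unique:
  assumes "indep X" "lincomb c X = lincomb c' X" "e \<in> X"
  shows "c e = c' e"
proof -
  have "lincomb (\<lambda>e. c e - c' e) X = (\<lambda>_. 0)"
  proof
    fix i
    have "lincomb c X i = lincomb c' X i"
      using assms(2) by simp
    then show "lincomb (\<lambda>e. c e - c' e) X i = 0"
      unfolding lincomb_def by (simp add: left_diff_distrib sum_subtractf)
  qed
  then show ?thesis
    using assms unfolding indep_def by auto
qed

lemma in_span_column: "finite X \<Longrightarrow> e \<in> X \<Longrightarrow> in_span (column e) X"
  unfolding in_span_def using lincomb_indicator by metis

lemma in_span_mono: "finite X \<Longrightarrow> Y \<subseteq> X \<Longrightarrow> in_span v Y \<Longrightarrow> in_span v X"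
  unfolding in_span_def using lincomb_extend by metis

lemma in_span_lincomb:
  assumes "finite X" "finite Y" "\<forall>y\<in>Y. in_span (column y) X"
  shows "in_span (lincomb c Y) X"
proof -
  obtain d where d: "\<And>y. y \<in> Y \<Longrightarrow> column y = lincomb (d y) X"
    using assms(3) unfolding in_span_def by metis
  have "lincomb c Y = lincomb (\<lambda>x. \<Sum>y\<in>Y. c y * d y x) X"
  proof
    fix i
    have "lincomb c Y i = (\<Sum>y\<in>Y. c y * lincomb (d y) X i)"
      unfolding lincomb_def[of c Y] using d by (auto intro!: sum.cong)
    also have "\<dots> = (\<Sum>y\<in>Y. \<Sum>x\<in>X. c y * d y x * column x i)"
      unfolding lincomb_def by (simp add: sum_distrib_left mult.assoc)
    also have "\<dots> = lincomb (\<lambda>x. \<Sum>y\<in>Y. c y * d y x) X i"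
      unfolding lincomb_def by (subst sum.swap) (simp add: sum_distrib_right)
    finally show "lincomb c Y i = lincomb (\<lambda>x. \<Sum>y\<in>Y. c y * d y x) X i" .
  qed
  then show ?thesis
    unfolding in_span_def by blast
qed

lemma indep_insert:
  assumes "indep X" "e \<notin> X" "\<not> in_span (column e) X"
  shows "indep (insert e X)"
  unfolding indep_def
proof (intro conjI allI impI ballI)
  have fin: "finite X"
    using assms(1) by (rule indep_finite)
  then show "finite (insert e X)"
    by simp
  fix c x
  assume c: "lincomb c (insert e X) = (\<lambda>_. 0)" and x: "x \<in> insert e X"
  have split: "lincomb c (insert e X) i = c e * column e i + lincomb c X i" for i
    unfolding lincomb_def using fin assms(2) by simp
  have "c e = 0"
  proof (rule ccontr)
    assume "c e \<noteq> 0"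
    have "column e = lincomb (\<lambda>y. - c y / c e) X"
    proof
      fix i
      have "c e * column e i + lincomb c X i = 0"
        using split[of i] c by simp
      then have "column e i = - lincomb c X i / c e"
        using \<open>c e \<noteq> 0\<close> by (simp add: field_simps)
      then show "column e i = lincomb (\<lambda>y. - c y / c e) X i"
        unfolding lincomb_def by (simp add: sum_divide_distrib sum_negf)
    qed
    then show False
      using assms(3) unfolding in_span_def by blast
  qed
  moreover have "lincomb c X = (\<lambda>_. 0)"
    using split c \<open>c e = 0\<close> by (metis mult_zero_left add_0)
  ultimately show "c x = 0"
    using assms(1) x unfolding indep_def by blast
qed

lemma indep_extend_spanning:
  assumes "finite E" "Y \<subseteq> E" "indep Y"
  obtains B where "Y \<subseteq> B" "B \<subseteq> E" "indep B" "\<forall>e\<in>E. in_span (column e) B"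
proof -
  let ?P = "\<lambda>T. Y \<subseteq> T \<and> T \<subseteq> E \<and> indep T"
  obtain B where B: "finite B" "maximal B ?P"
    using maximal_exists_superset[of E ?P Y] assms by blast
  then have PB: "?P B"
    unfolding maximal_def by blast
  have spans: "in_span (column e) B" if "e \<in> E" for e
  proof (rule ccontr)
    assume span: "\<not> in_span (column e) B"
    then have "e \<notin> B"
      using in_span_column B(1) by blast
    with span have "?P (insert e B)"
      using indep_insert PB \<open>e \<in> E\<close> by blast
    then have "insert e B = B"
      using B(2) unfolding maximal_def by (meson subset_insertI)
    with \<open>e \<notin> B\<close> show False
      by blast
  qed
  show ?thesis
    by (rule that[of B]) (use PB spans in auto)
qed

lemma coeff_zero_if_in_span_delete:
  assumes "indep B" "v = lincomb c B" "b \<in> B" "in_span v (B - {b})"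
  shows "c b = 0"
proof -
  obtain c' where "v = lincomb c' (B - {b})"
    using assms(4) unfolding in_span_def by blast
  then have "lincomb c B = lincomb (\<lambda>e. if e \<in> B - {b} then c' e else 0) B"
    using assms(1,2) lincomb_extend[of B "B - {b}" c'] indep_finite by auto
  from indep_lincomb_unique[OF assms(1) this assms(3)] show ?thesis
    by simp
qed

lemma lincomb_eq_complement_imp_zero:
  assumes "indep B" "B' \<subseteq> B" "lincomb a B' = lincomb a' (B - B')"
  shows "lincomb a B' = (\<lambda>_. 0)"
proof -
  have fin: "finite B" "finite B'"
    using assms(1,2) indep_finite finite_subset by blast+
  let ?c = "\<lambda>e. if e \<in> B' then a e else - a' e"
  have "lincomb ?c B = (\<lambda>_. 0)"
  proof
    fix i
    have "lincomb ?c B i = lincomb ?c B' i + lincomb ?c (B - B') i"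
      using lincomb_Un[of B' "B - B'" ?c i] fin assms(2) by (simp add: Un_absorb1)
    also have "\<dots> = lincomb a B' i - lincomb a' (B - B') i"
      unfolding lincomb_def by (simp add: sum_negf)
    finally show "lincomb ?c B i = 0"
      using assms(3) by simp
  qed
  then have "\<forall>e\<in>B'. ?c e = 0"
    using assms(1,2) unfolding indep_def by blast
  then have "\<forall>e\<in>B'. a e = 0"
    by simp
  then show ?thesis
    unfolding lincomb_def by simp
qed

lemma indep_Un_if_spans_split:
  assumes "indep X1" "indep X2" "X1 \<inter> X2 = {}" "indep B" "B' \<subseteq> B"
    and "\<forall>x\<in>X1. in_span (column x) B'" "\<forall>x\<in>X2. in_span (column x) (B - B')"
  shows "indep (X1 \<union> X2)"
  unfolding indep_def
proof (intro conjI allI impI ballI)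
  have fin: "finite X1" "finite X2" "finite B" "finite B'"
    using assms(1,2,4,5) indep_finite finite_subset by blast+
  then show "finite (X1 \<union> X2)"
    by simp
  fix c x
  assume c: "lincomb c (X1 \<union> X2) = (\<lambda>_. 0)" and x: "x \<in> X1 \<union> X2"
  obtain a a' where a: "lincomb c X1 = lincomb a B'" and a': "lincomb (\<lambda>e. - c e) X2 = lincomb a' (B - B')"
    using in_span_lincomb[of B' X1 c] in_span_lincomb[of "B - B'" X2 "\<lambda>e. - c e"] fin assms(6,7)
    unfolding in_span_def by auto
  have sum0: "lincomb c X1 i + lincomb c X2 i = 0" for i
    using c lincomb_Un[OF fin(1,2) assms(3), of c i] by simp
  have "lincomb c X1 = lincomb (\<lambda>e. - c e) X2"
  proof
    fix i
    show "lincomb c X1 i = lincomb (\<lambda>e. - c e) X2 i"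
      using sum0[of i] unfolding lincomb_def by (simp add: sum_negf add_eq_0_iff)
  qed
  then have "lincomb c X1 = (\<lambda>_. 0)"
    using lincomb_eq_complement_imp_zero[OF assms(4,5)] a a' by metis
  moreover from this have "lincomb c X2 = (\<lambda>_. 0)"
    using sum0 by auto
  ultimately show "c x = 0"
    using assms(1,2) x unfolding indep_def by blast
qed

section \<open>Maximal minors and independence\<close>

lemma dim_A: "dim_row A = k" "dim_col A = n"
  using A_carrier by auto

definition col_submat :: "nat list \<Rightarrow> real mat" where
  "col_submat xs = mat k k (\<lambda>(i, j). A $$ (i, xs ! j))"

lemma col_submat_carrier [simp]: "col_submat xs \<in> carrier_mat k k"
  unfolding col_submat_def by simp

lemma col_det_eq_det_col_submat: "col_det A xs = det (col_submat xs)"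
  unfolding col_det_def col_submat_def dim_A ..

lemma lincomb_sorted:
  assumes "finite K" "i < k"
  shows "lincomb c K i =
    (\<Sum>j<card K. A $$ (i, sorted_list_of_set K ! j) * c (sorted_list_of_set K ! j))"
  unfolding lincomb_def column_def
  using sum_over_sorted_list_of_set[OF assms(1)] assms(2) by (simp add: mult.commute)

lemma indep_kernel_trivial:
  assumes "indep K" "v \<in> carrier_vec (card K)"
    and "\<And>i. i < k \<Longrightarrow> (\<Sum>j<card K. A $$ (i, sorted_list_of_set K ! j) * v $ j) = 0"
  shows "v = 0\<^sub>v (card K)"
proof -
  let ?s = "sorted_list_of_set K"
  have fin: "finite K"
    using assms(1) by (rule indep_finite)
  have bij: "bij_betw ((!) ?s) {0..<card K} K"
    using fin by (rule bij_betw_nth_sorted_list_of_set)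
  define c where "c e = v $ inv_into {0..<card K} ((!) ?s) e" for e
  have c_nth: "c (?s ! j) = v $ j" if "j < card K" for j
    unfolding c_def using bij that by (simp add: bij_betw_def inv_into_f_f)
  have "lincomb c K = (\<lambda>_. 0)"
  proof
    fix i
    show "lincomb c K i = 0"
    proof (cases "i < k")
      case True
      then show ?thesis
        using lincomb_sorted[OF fin True, of c] assms(3)[OF True] c_nth by simp
    qed (simp add: lincomb_def column_def)
  qed
  then have "\<forall>e\<in>K. c e = 0"
    using assms(1) unfolding indep_def by blast
  then have "v $ j = 0" if "j < card K" for j
    using c_nth[OF that] bij that unfolding bij_betw_def by force
  then show ?thesis
    using assms(2) by (intro eq_vecI) auto
qed

lemma col_det_nonzero_if_indep:
  assumes "indep K" "card K = k"
  shows "col_det A (sorted_list_of_set K) \<noteq> 0"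
proof
  let ?M = "col_submat (sorted_list_of_set K)"
  assume "col_det A (sorted_list_of_set K) = 0"
  then obtain v where v: "v \<in> carrier_vec k" "v \<noteq> 0\<^sub>v k" "?M *\<^sub>v v = 0\<^sub>v k"
    using det_0_iff_vec_prod_zero_field[OF col_submat_carrier]
    by (auto simp: col_det_eq_det_col_submat)
  have "(\<Sum>j<card K. A $$ (i, sorted_list_of_set K ! j) * v $ j) = 0" if "i < k" for i
  proof -
    have "(?M *\<^sub>v v) $ i = 0"
      using v(3) that by simp
    then show ?thesis
      using that v(1) assms(2) by (simp add: col_submat_def scalar_prod_def atLeast0LessThan)
  qed
  then show False
    using indep_kernel_trivial[OF assms(1)] v(1,2) assms(2) by simp
qed

lemma indep_if_col_det_nonzero:
  assumes "finite K" "card K = k" "col_det A (sorted_list_of_set K) \<noteq> 0"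
  shows "indep K"
  unfolding indep_def
proof (intro conjI allI impI ballI)
  let ?s = "sorted_list_of_set K"
  show "finite K"
    by fact
  fix c e
  assume c: "lincomb c K = (\<lambda>_. 0)" and e: "e \<in> K"
  define v where "v = vec k (\<lambda>j. c (?s ! j))"
  have "col_submat ?s *\<^sub>v v = 0\<^sub>v k"
  proof (rule eq_vecI)
    fix i
    assume "i < dim_vec (0\<^sub>v k :: real vec)"
    then have i: "i < k"
      by simp
    have "(col_submat ?s *\<^sub>v v) $ i = lincomb c K i"
      using i lincomb_sorted[OF assms(1) i, of c] assms(2)
      by (simp add: col_submat_def scalar_prod_def v_def atLeast0LessThan)
    then show "(col_submat ?s *\<^sub>v v) $ i = 0\<^sub>v k $ i"
      using c i by simp
  qed (simp add: col_submat_def)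
  moreover have "v \<in> carrier_vec k"
    by (simp add: v_def)
  ultimately have "v = 0\<^sub>v k"
    using det_0_iff_vec_prod_zero_field[OF col_submat_carrier, of ?s] assms(3)
    by (auto simp: col_det_eq_det_col_submat)
  moreover obtain j where "j < k" "e = ?s ! j"
    using bij_betw_nth_sorted_list_of_set[OF assms(1)] e assms(2)
    unfolding bij_betw_def by force
  ultimately show "c e = 0"
    by (metis index_vec index_zero_vec(1) v_def)
qed

lemma indep_card_le:
  assumes "indep X"
  shows "card X \<le> k"
proof (rule ccontr)
  assume "\<not> card X \<le> k"
  then obtain Y where Y: "Y \<subseteq> X" "card Y = Suc k"
    by (meson not_le less_eq_Suc_le obtain_subset_with_card_n)
  \<comment> \<open>padding the k + 1 columns of Y with a zero row gives a singular matrix\<close>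
  define N where "N = mat (Suc k) (Suc k)
    (\<lambda>(i, j). if i < k then A $$ (i, sorted_list_of_set Y ! j) else 0)"
  have N: "N \<in> carrier_mat (Suc k) (Suc k)"
    unfolding N_def by simp
  have "det N = (\<Sum>j<Suc k. N $$ (k, j) * cofactor N k j)"
    by (rule laplace_expansion_row[OF N]) simp
  also have "\<dots> = 0"
    by (simp add: N_def)
  finally obtain v where v: "v \<in> carrier_vec (Suc k)" "v \<noteq> 0\<^sub>v (Suc k)" "N *\<^sub>v v = 0\<^sub>v (Suc k)"
    using det_0_iff_vec_prod_zero_field[OF N] by blast
  have "(\<Sum>j<card Y. A $$ (i, sorted_list_of_set Y ! j) * v $ j) = 0" if "i < k" for i
  proof -
    have "(N *\<^sub>v v) $ i = 0"
      using v(3) that by simp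
    then show ?thesis
      using that v(1) Y(2) by (simp add: N_def scalar_prod_def atLeast0LessThan)
  qed
  then show False
    using indep_kernel_trivial[OF indep_subset[OF assms Y(1)]] v(1,2) Y(2) by simp
qed

lemma in_span_basis:
  assumes "indep K" "card K = k"
  shows "in_span (column e) K"
proof (rule ccontr)
  assume span: "\<not> in_span (column e) K"
  then have "e \<notin> K"
    using in_span_column indep_finite assms(1) by blast
  then have "card (insert e K) = Suc k"
    using assms indep_finite by simp
  moreover have "indep (insert e K)"
    using indep_insert[OF assms(1) \<open>e \<notin> K\<close> span] .
  ultimately show False
    using indep_card_le by fastforce
qed

lemma col_det_zero_if_spanned_by_fewer:
  assumes "indep K" "card K < k" "finite B" "card B = k" "\<forall>e\<in>B. in_span (column e) K"
  shows "col_det A (sorted_list_of_set B) = 0"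
proof -
  let ?m = "card K" and ?sK = "sorted_list_of_set K" and ?sB = "sorted_list_of_set B"
  have fin: "finite K"
    using assms(1) by (rule indep_finite)
  obtain d where d: "\<And>e. e \<in> B \<Longrightarrow> column e = lincomb (d e) K"
    using assms(5) unfolding in_span_def by metis
  \<comment> \<open>the columns of B factor through the fewer than k columns of K\<close>
  define P1 where "P1 = mat k k (\<lambda>(i, j). if j < ?m then A $$ (i, ?sK ! j) else 0)"
  define P2 where "P2 = mat k k (\<lambda>(j, l). if j < ?m then d (?sB ! l) (?sK ! j) else 0)"
  have P: "P1 \<in> carrier_mat k k" "P2 \<in> carrier_mat k k"
    unfolding P1_def P2_def by auto
  have "det P1 = (\<Sum>i<k. P1 $$ (i, ?m) * cofactor P1 i ?m)"
    by (rule laplace_expansion_column[OF P(1) assms(2)])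
  also have "\<dots> = 0"
    using assms(2) by (auto intro!: sum.neutral simp: P1_def)
  finally have det_P1: "det P1 = 0" .
  have "P1 * P2 = col_submat ?sB"
  proof (rule eq_matI)
    fix i l
    assume "i < dim_row (col_submat ?sB)" "l < dim_col (col_submat ?sB)"
    then have il: "i < k" "l < k"
      by (auto simp: col_submat_def)
    then have "?sB ! l \<in> B"
      using assms(3,4) by (metis length_sorted_list_of_set nth_mem set_sorted_list_of_set)
    have "(P1 * P2) $$ (i, l) = (\<Sum>j<k. if j < ?m then A $$ (i, ?sK ! j) * d (?sB ! l) (?sK ! j) else 0)"
      using il P by (auto simp: scalar_prod_def P1_def P2_def atLeast0LessThan intro!: sum.cong)
    also have "\<dots> = (\<Sum>j<?m. A $$ (i, ?sK ! j) * d (?sB ! l) (?sK ! j))"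
      using assms(2) by (intro sum.mono_neutral_cong_right) auto
    also have "\<dots> = lincomb (d (?sB ! l)) K i"
      using lincomb_sorted[OF fin il(1)] by simp
    also have "\<dots> = col_submat ?sB $$ (i, l)"
      using d[OF \<open>?sB ! l \<in> B\<close>, symmetric] il by (simp add: column_def col_submat_def)
    finally show "(P1 * P2) $$ (i, l) = col_submat ?sB $$ (i, l)" .
  qed (auto simp: P1_def P2_def col_submat_def)
  then show ?thesis
    using det_mult[OF P] det_P1 by (simp add: col_det_eq_det_col_submat)
qed

lemma nonzero_col_det_if_full_rank:
  assumes "vec_space.rank k A = k"
  obtains B where "B \<subseteq> {0..<n}" "card B = k" "col_det A (sorted_list_of_set B) \<noteq> 0"
proof -
  interpret vs: vec_space "TYPE(real)" k .
  have "vs.lin_indpt {}"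
    by (rule vs.finite_lin_indpt2) auto
  then obtain S where S: "maximal S (\<lambda>T. T \<subseteq> set (cols A) \<and> vs.lin_indpt T)"
    using maximal_exists[where N = "card (set (cols A))" and B = "{}"
        and P = "\<lambda>T. T \<subseteq> set (cols A) \<and> vs.lin_indpt T"]
    by (auto intro: card_mono dest: finite_subset[OF _ List.finite_set])
  have "card S = k" "S \<subseteq> set (cols A)" "vs.lin_indpt S"
    using vs.rank_card_indpt[OF A_carrier S] assms S unfolding maximal_def by auto
  moreover have "set (cols A) = col A ` {0..<n}"
    using dim_A by (simp add: cols_def)
  ultimately obtain K where K: "K \<subseteq> {0..<n}" "inj_on (col A) K" "S = col A ` K"
    by (metis subset_image_inj)
  then have card_K: "card K = k"
    using \<open>card S = k\<close> card_image by metis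
  let ?sK = "sorted_list_of_set K" and ?M = "col_submat (sorted_list_of_set K)"
  have fin: "finite K"
    using K(1) finite_subset by blast
  have bij: "bij_betw ((!) ?sK) {0..<k} K"
    using bij_betw_nth_sorted_list_of_set[OF fin] card_K by simp
  have "col ?M j = col A (?sK ! j)" if "j < k" for j
  proof -
    have "?sK ! j < n"
      using bij_betwE[OF bij] that K(1) by fastforce
    then show ?thesis
      using that dim_A by (intro eq_vecI) (auto simp: col_submat_def)
  qed
  then have cols_M: "cols ?M = map (col A \<circ> (!) ?sK) [0..<k]"
    by (simp add: cols_def col_submat_def)
  have "set (cols ?M) = S"
    using bij K(3) by (simp add: cols_M image_image[symmetric] bij_betw_def)
  moreover have "distinct (cols ?M)"
    using bij K(2) unfolding cols_M bij_betw_def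
    by (simp add: distinct_map comp_inj_on)
  ultimately have "vs.rank ?M = k"
    using vs.lin_indpt_full_rank[OF col_submat_carrier] \<open>vs.lin_indpt S\<close> by simp
  then have "det ?M \<noteq> 0"
    using vs.det_rank_iff[OF col_submat_carrier] by simp
  then show ?thesis
    using that[of K] K(1) card_K by (simp add: col_det_eq_det_col_submat)
qed

lemma indep_extend_basis:
  assumes "vec_space.rank k A = k" "X \<subseteq> {0..<n}" "indep X"
  obtains B where "X \<subseteq> B" "B \<subseteq> {0..<n}" "card B = k" "indep B"
proof -
  obtain K where K: "X \<subseteq> K" "K \<subseteq> {0..<n}" "indep K" "\<forall>e\<in>{0..<n}. in_span (column e) K"
    using indep_extend_spanning[of "{0..<n}" X] assms(2,3) by blast
  obtain B where B: "B \<subseteq> {0..<n}" "card B = k" "col_det A (sorted_list_of_set B) \<noteq> 0"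
    using nonzero_col_det_if_full_rank[OF assms(1)] by blast
  have "\<not> card K < k"
  proof
    assume "card K < k"
    then have "col_det A (sorted_list_of_set B) = 0"
      using col_det_zero_if_spanned_by_fewer[OF K(3)] B(1,2) K(4) finite_subset by blast
    with B(3) show False ..
  qed
  then show ?thesis
    using that[of K] K indep_card_le[OF K(3)] by simp
qed

lemma matrix_matroid_iff_indep:
  assumes "vec_space.rank k A = k"
  shows "X \<in> matrix_matroid A \<longleftrightarrow> X \<subseteq> {0..<n} \<and> indep X"
proof
  assume "X \<in> matrix_matroid A"
  then obtain B where B: "B \<subseteq> {0..<n}" "card B = k" "max_minor A B \<noteq> 0" "X \<subseteq> B"
    using dim_A unfolding matrix_matroid_def matrix_bases_def by auto
  then have "indep B"
    using indep_if_col_det_nonzero finite_subset[OF B(1)] by (simp add: max_minor_col_det)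
  then show "X \<subseteq> {0..<n} \<and> indep X"
    using B indep_subset by blast
next
  assume "X \<subseteq> {0..<n} \<and> indep X"
  then obtain B where B: "X \<subseteq> B" "B \<subseteq> {0..<n}" "card B = k" "indep B"
    using indep_extend_basis[OF assms] by blast
  then have "max_minor A B \<noteq> 0"
    using col_det_nonzero_if_indep by (simp add: max_minor_col_det)
  then show "X \<in> matrix_matroid A"
    using B dim_A unfolding matrix_matroid_def matrix_bases_def by auto
qed

section \<open>Minors differing in two columns\<close>

lemma col_det_insert_pair:
  assumes "finite X" "p \<notin> X" "q \<notin> X" "p \<noteq> q" "card X + 2 = k"
  shows "col_det A (sorted_list_of_set (insert p (insert q X))) =
    pair_sign X p q * col_det A (sorted_list_of_set X @ [p, q])"
proof -
  have 1: "col_det A (sorted_list_of_set (insert p (insert q X)) @ []) =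
      (-1) ^ card {y \<in> insert q X. p < y} * col_det A (sorted_list_of_set (insert q X) @ [p])"
    by (rule col_det_insert) (use assms dim_A in auto)
  have 2: "col_det A (sorted_list_of_set (insert q X) @ [p]) =
      (-1) ^ card {y \<in> X. q < y} * col_det A (sorted_list_of_set X @ [q, p])"
    by (rule col_det_insert) (use assms dim_A in auto)
  have 3: "col_det A (sorted_list_of_set X @ [q, p]) = - col_det A (sorted_list_of_set X @ [p, q])"
    using col_det_swap[of "sorted_list_of_set X" "[]" A q p] assms dim_A by simp
  have "card {y \<in> insert q X. p < y} = card {y \<in> X. p < y} + (if p < q then 1 else 0)"
  proof (cases "p < q")
    case True
    then have "{y \<in> insert q X. p < y} = insert q {y \<in> X. p < y}"
      by auto
    then show ?thesis
      using True assms(1,3) by simp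
  qed (auto intro: arg_cong[where f = card])
  then show ?thesis
    using 1 2 3 assms(4) unfolding pair_sign_def
    by (cases "p < q") (auto simp: power_add)
qed

definition pair_det :: "nat set \<Rightarrow> (nat \<Rightarrow> real) \<Rightarrow> (nat \<Rightarrow> real) \<Rightarrow> real" where
  "pair_det X u w = det (mat k k (\<lambda>(i, j). if j = k - 2 then u i else if j = k - 1 then w i
     else A $$ (i, sorted_list_of_set X ! j)))"

lemma col_det_append_pair:
  assumes "card X + 2 = k"
  shows "col_det A (sorted_list_of_set X @ [p, q]) = pair_det X (column p) (column q)"
  unfolding col_det_def pair_det_def dim_A
  by (rule arg_cong[of _ _ det], rule eq_matI) (use assms in \<open>auto simp: nth_append column_def\<close>)

lemma max_minor_insert_pair:
  assumes "finite X" "p \<notin> X" "q \<notin> X" "p \<noteq> q" "card X + 2 = k"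
  shows "max_minor A (insert p (insert q X)) = pair_sign X p q * pair_det X (column p) (column q)"
  using col_det_insert_pair[OF assms] col_det_append_pair[OF assms(5)]
  by (simp add: max_minor_col_det)

lemma pair_det_swap:
  assumes "finite X" "card X + 2 = k"
  shows "pair_det X (column q) (column p) = - pair_det X (column p) (column q)"
  using col_det_swap[of "sorted_list_of_set X" "[]" A q p] col_det_append_pair[OF assms(2)] assms dim_A
  by simp

lemma pair_det_same: "2 \<le> k \<Longrightarrow> pair_det X u u = 0"
  unfolding pair_det_def
  by (rule det_identical_columns[of _ k "k - 2" "k - 1"]) auto

lemma pair_det_column_zero:
  assumes "finite X" "card X + 2 = k" "y \<in> X"
  shows "pair_det X (column y) w = 0" "pair_det X u (column y) = 0"
proof -
  obtain j where j: "j < card X" "y = sorted_list_of_set X ! j"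
    using bij_betw_nth_sorted_list_of_set[OF assms(1)] assms(3) unfolding bij_betw_def by force
  then have col: "column y i = A $$ (i, sorted_list_of_set X ! j)" if "i < k" for i
    using that by (simp add: column_def)
  have j_le: "j < k - 2" "k - 2 < k" "k - 1 < k" "j \<noteq> k - 2" "j \<noteq> k - 1" "k - 2 \<noteq> k - 1"
    using j(1) assms(2) by auto
  show "pair_det X (column y) w = 0"
    unfolding pair_det_def
    by (rule det_identical_columns[of _ k "k - 2" j]) (use j_le col in auto)
  show "pair_det X u (column y) = 0"
    unfolding pair_det_def
    by (rule det_identical_columns[of _ k "k - 1" j]) (use j_le col in auto)
qed

lemma pair_det_lincomb:
  assumes "finite X" "card X + 2 = k"
  shows "pair_det X (lincomb c Y) w = (\<Sum>y\<in>Y. c y * pair_det X (column y) w)"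
    and "pair_det X u (lincomb c Y) = (\<Sum>y\<in>Y. c y * pair_det X u (column y))"
proof -
  show "pair_det X (lincomb c Y) w = (\<Sum>y\<in>Y. c y * pair_det X (column y) w)"
    unfolding pair_det_def lincomb_def
    using det_col_sum[where l = "k - 2" and Y = Y and a = c and f = column
        and F = "\<lambda>i j. if j = k - 1 then w i else A $$ (i, sorted_list_of_set X ! j)"] assms(2)
    by simp
  have swap: "pair_det X u w = det (mat k k (\<lambda>(i, j). if j = k - 1 then w i else if j = k - 2 then u i
     else A $$ (i, sorted_list_of_set X ! j)))" for u w
    unfolding pair_det_def by (rule arg_cong[of _ _ det], rule eq_matI) (use assms(2) in auto)
  show "pair_det X u (lincomb c Y) = (\<Sum>y\<in>Y. c y * pair_det X u (column y))"
    unfolding swap lincomb_def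
    using det_col_sum[where l = "k - 1" and Y = Y and a = c and f = column
        and F = "\<lambda>i j. if j = k - 2 then u i else A $$ (i, sorted_list_of_set X ! j)"] assms(2)
    by simp
qed

lemma pair_det_lincomb_pair:
  assumes "finite X" "card X + 2 = k" "x \<notin> X" "b \<notin> X" "x \<noteq> b"
  shows "pair_det X (lincomb c (insert x (insert b X))) w =
      c x * pair_det X (column x) w + c b * pair_det X (column b) w"
    and "pair_det X u (lincomb c (insert x (insert b X))) =
      c x * pair_det X u (column x) + c b * pair_det X u (column b)"
  using assms pair_det_column_zero[OF assms(1,2)] by (simp_all add: pair_det_lincomb)

section \<open>Separators\<close>

definition indep_separator :: "nat set \<Rightarrow> nat set \<Rightarrow> bool" where
  "indep_separator E S \<longleftrightarrow> S \<subseteq> E \<and> (\<forall>X\<subseteq>E. indep X \<longleftrightarrow> indep (X \<inter> S) \<and> indep (X - S))"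

lemma indep_separator_subset: "indep_separator E S \<Longrightarrow> S \<subseteq> E"
  unfolding indep_separator_def by (rule conjunct1)

lemma indep_Un_if_separator:
  assumes "indep_separator E S" "X \<subseteq> S" "Y \<subseteq> E - S" "indep X" "indep Y"
  shows "indep (X \<union> Y)"
proof -
  have "X \<union> Y \<subseteq> E" "(X \<union> Y) \<inter> S = X" "(X \<union> Y) - S = Y"
    using indep_separator_subset[OF assms(1)] assms(2,3) by auto
  moreover have "indep (X \<union> Y) \<longleftrightarrow> indep ((X \<union> Y) \<inter> S) \<and> indep ((X \<union> Y) - S)"
    using assms(1) \<open>X \<union> Y \<subseteq> E\<close> unfolding indep_separator_def by blast
  ultimately show ?thesis
    using assms(4,5) by simp
qed

lemma indep_separator_if_spans_split:
  assumes "indep B" "BS \<subseteq> B" "S \<subseteq> E"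
    and "\<forall>s\<in>S. in_span (column s) BS" "\<forall>e\<in>E - S. in_span (column e) (B - BS)"
  shows "indep_separator E S"
  unfolding indep_separator_def
proof (intro conjI allI impI)
  fix X
  assume "X \<subseteq> E"
  show "indep X \<longleftrightarrow> indep (X \<inter> S) \<and> indep (X - S)"
  proof
    assume "indep (X \<inter> S) \<and> indep (X - S)"
    then have "indep ((X \<inter> S) \<union> (X - S))"
      by (intro indep_Un_if_spans_split[OF _ _ _ assms(1,2)]) (use assms(4,5) \<open>X \<subseteq> E\<close> in auto)
    then show "indep X"
      by (simp add: Int_Diff_Un)
  qed (meson Diff_subset inf_le1 indep_subset)
qed (fact assms(3))

lemma not_separator_exchange:
  assumes "finite C" "Ca \<subseteq> C" "\<not> indep_separator C Ca"
  obtains BC x z where "BC \<subseteq> C" "indep BC" "\<forall>c\<in>C. in_span (column c) BC"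
    "x \<in> BC \<inter> Ca" "z \<in> C - Ca" "\<not> in_span (column z) (BC - {x})"
proof -
  have "finite Ca"
    using assms(1,2) by (rule finite_subset[rotated])
  then obtain Ba where Ba: "Ba \<subseteq> Ca" "indep Ba" "\<forall>e\<in>Ca. in_span (column e) Ba"
    by (rule indep_extend_spanning[OF _ empty_subsetI indep_empty])
  have "Ba \<subseteq> C"
    using Ba(1) assms(2) by (rule subset_trans)
  then obtain BC where BC: "Ba \<subseteq> BC" "BC \<subseteq> C" "indep BC" "\<forall>e\<in>C. in_span (column e) BC"
    by (rule indep_extend_spanning[OF assms(1) _ Ba(2)])
  note exchange = that
  show ?thesis
  \<comment> \<open>otherwise no element of C - Ca uses Ba in its expansion, so Ca would separate C\<close>
  proof (rule ccontr)
    assume "\<not> thesis"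
    have in_span_delete: "in_span (column z) (BC - {x})" if "x \<in> Ba" "z \<in> C - Ca" for x z
    proof (rule ccontr)
      assume "\<not> in_span (column z) (BC - {x})"
      then have thesis
        using exchange[OF BC(2,3,4), of x z] that BC(1) Ba(1) by blast
      with \<open>\<not> thesis\<close> show False ..
    qed
    have outer: "in_span (column z) (BC - Ba)" if z: "z \<in> C - Ca" for z
    proof -
      obtain c where c: "column z = lincomb c BC"
        using BC(4) z unfolding in_span_def by blast
      have "c x = 0" if "x \<in> Ba" for x
        using coeff_zero_if_in_span_delete[OF BC(3) c _ in_span_delete[OF that z]] that BC(1)
        by blast
      then have "lincomb c BC = lincomb c (BC - Ba)"
        using lincomb_diff_zero_coeffs[OF indep_finite[OF BC(3)] _ BC(1)] by blast
      then show ?thesis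
        using c unfolding in_span_def by metis
    qed
    have "indep_separator C Ca"
      using indep_separator_if_spans_split[OF BC(3,1) assms(2) Ba(3)] outer by blast
    with assms(3) show False ..
  qed
qed

lemma coeffs_if_not_in_span_delete:
  assumes "indep B" "BC \<subseteq> B" "x \<in> BC" "z \<noteq> x"
    and "in_span (column z) BC" "\<not> in_span (column z) (BC - {x})"
  obtains c where "column z = lincomb c B" "c x \<noteq> 0" "\<forall>e\<in>B - BC. c e = 0" "z \<notin> B"
proof -
  have fin: "finite B" "finite BC"
    using assms(1,2) indep_finite finite_subset by blast+
  obtain c0 where c0: "column z = lincomb c0 BC"
    using assms(5) unfolding in_span_def by blast
  define c where "c e = (if e \<in> BC then c0 e else 0)" for e
  have z: "column z = lincomb c B"
    using c0 lincomb_extend[OF fin(1) assms(2)] unfolding c_def by simp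
  have "c x \<noteq> 0"
  proof
    assume "c x = 0"
    then have "column z = lincomb c0 (BC - {x})"
      using c0 lincomb_diff_zero_coeffs[OF fin(2), of "{x}" c0] assms(3) unfolding c_def by simp
    with assms(6) show False
      unfolding in_span_def by blast
  qed
  moreover have "z \<notin> B"
  proof
    assume "z \<in> B"
    then have "z \<notin> BC"
      using assms(4,6) in_span_column[of "BC - {x}" z] fin by auto
    have "lincomb (\<lambda>y. if y = z then 1 else 0) B = lincomb c B"
      using lincomb_indicator[OF fin(1) \<open>z \<in> B\<close>] z by simp
    from indep_lincomb_unique[OF assms(1) this \<open>z \<in> B\<close>] have "c z = 1"
      by simp
    with \<open>z \<notin> BC\<close> show False
      unfolding c_def by simp
  qed
  ultimately show ?thesis
    using that[of c] z unfolding c_def by simp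
qed

end

section \<open>Nonnegative maximal minors\<close>

lemma restr_restr: "C \<subseteq> I \<Longrightarrow> restr (restr M I) C = restr M C"
  unfolding restr_def by auto

locale positroid_matrix = column_family +
  assumes full_rank: "vec_space.rank k A = k"
    and nonneg_minors: "S \<subseteq> {0..<n} \<Longrightarrow> card S = k \<Longrightarrow> max_minor A S \<ge> 0"
begin

lemma coeff_zero_by_nonneg_minors:
  assumes B: "indep B" "card B = k" "B \<subseteq> {0..<n}"
    and xb: "x \<in> B" "b \<in> B" "x \<noteq> b"
    and zd: "z < n" "d < n" "z \<notin> B" "d \<notin> B" "z \<noteq> d"
    and z: "column z = lincomb c B" "c x \<noteq> 0" "c b = 0"
    and d: "column d = lincomb e B"
    and parity: "even ((if b < x then 1 else 0) + (if d < z then 1 else 0) + (if d < x then 1 else 0)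
      + (if z < b then 1 else 0 :: nat))"
  shows "e b = 0"
proof -
  define X where "X = B - {x, b}"
  have fin: "finite X"
    unfolding X_def using indep_finite[OF B(1)] by simp
  have B_eq: "B = insert x (insert b X)"
    unfolding X_def using xb by auto
  have notin: "x \<notin> X" "b \<notin> X" "z \<notin> X" "d \<notin> X" "x \<noteq> d" "b \<noteq> z"
    unfolding X_def using zd xb by auto
  have card_X: "card X + 2 = k"
    using B(2) fin notin xb(3) unfolding B_eq by simp
  note minor = max_minor_insert_pair[OF fin _ _ _ card_X]
  note expand = pair_det_lincomb_pair[OF fin card_X notin(1,2) xb(3)]
  define D where "D = pair_det X (column x) (column b)"
  have same: "pair_det X (column x) (column x) = 0"
    using card_X by (intro pair_det_same) simp
  have Qxd: "pair_det X (column x) (column d) = e b * D"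
    using expand(2)[of "column x" e] same by (simp add: d B_eq D_def)
  have Qzd: "pair_det X (column z) (column d) = c x * (e b * D)"
    using expand(1)[of c "column d"] Qxd z(3) by (simp add: z(1) B_eq)
  have Qbz: "pair_det X (column b) (column z) = - (c x * D)"
    using expand(2)[of "column b" c] z(3) pair_det_swap[OF fin card_X, of b x]
    by (simp add: z(1) B_eq D_def)
  have "max_minor A B \<noteq> 0"
    using col_det_nonzero_if_indep[OF B(1,2)] by (simp add: max_minor_col_det)
  then have "D \<noteq> 0"
    using minor[of x b] notin xb(3) by (simp add: B_eq D_def)
  \<comment> \<open>the two products of the Grassmann-Pluecker relation are T and - T\<close>
  define T where "T = pair_sign X x b * pair_sign X z d * (c x * e b * D * D)"
  have "max_minor A B * max_minor A (insert z (insert d X)) = T"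
    using minor[of x b] minor[of z d] notin xb(3) zd(5) Qzd
    by (simp add: B_eq D_def T_def algebra_simps)
  moreover have "max_minor A (insert x (insert d X)) * max_minor A (insert b (insert z X)) = - T"
    using minor[of x d] minor[of b z] notin Qxd Qbz pair_sign_exchange[OF parity, of X]
    by (simp add: T_def algebra_simps)
  moreover have "max_minor A Y \<ge> 0" if "Y \<in> {B, insert z (insert d X), insert x (insert d X),
      insert b (insert z X)}" for Y
    using that B(3) zd(1,2) fin notin card_X xb(3) zd(5) unfolding B_eq
    by (auto intro!: nonneg_minors)
  ultimately have "T = 0"
    by (smt (verit, best) insertCI mult_nonneg_nonneg)
  moreover have "pair_sign X x b * pair_sign X z d \<noteq> 0"
    unfolding pair_sign_def by simp
  ultimately show ?thesis
    using \<open>D \<noteq> 0\<close> z(2) unfolding T_def by simp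
qed

abbreviation P :: "nat set set" where
  "P \<equiv> matrix_matroid A"

lemma restr_matroid_ground: "restr P {0..<n} = P"
  unfolding restr_def using matrix_matroid_iff_indep[OF full_rank] by auto

lemma separator_restr_iff:
  assumes "E \<subseteq> {0..<n}"
  shows "separator E (restr P E) S \<longleftrightarrow> indep_separator E S"
proof -
  have restr_iff: "X \<in> restr P E \<longleftrightarrow> indep X" if "X \<subseteq> E" for X
    using that assms matrix_matroid_iff_indep[OF full_rank] unfolding restr_def by auto
  have "(X \<in> restr P E \<longleftrightarrow> X \<inter> S \<in> restr P E \<and> X - S \<in> restr P E) \<longleftrightarrow>
      (indep X \<longleftrightarrow> indep (X \<inter> S) \<and> indep (X - S))" if "X \<subseteq> E" for X
    using restr_iff[OF that] restr_iff[of "X \<inter> S"] restr_iff[of "X - S"] that by blast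
  then show ?thesis
    unfolding separator_def indep_separator_def by blast
qed

lemma connected_restr_iff:
  assumes "E \<subseteq> {0..<n}"
  shows "matroid_connected E (restr P E) \<longleftrightarrow> \<not> (\<exists>S. S \<noteq> {} \<and> S \<subset> E \<and> indep_separator E S)"
  unfolding matroid_connected_def separator_restr_iff[OF assms] ..

lemma connected_component_iff:
  assumes "I \<subseteq> {0..<n}"
  shows "connected_component I (restr P I) C \<longleftrightarrow>
    C \<noteq> {} \<and> indep_separator I C \<and> \<not> (\<exists>S. S \<noteq> {} \<and> S \<subset> C \<and> indep_separator C S)"
proof -
  have "matroid_connected C (restr (restr P I) C) \<longleftrightarrow>
      \<not> (\<exists>S. S \<noteq> {} \<and> S \<subset> C \<and> indep_separator C S)" if "indep_separator I C"
  proof -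
    have "C \<subseteq> I"
      using that by (rule indep_separator_subset)
    moreover from this have "C \<subseteq> {0..<n}"
      using assms by (rule subset_trans)
    ultimately show ?thesis
      using restr_restr connected_restr_iff by simp
  qed
  then show ?thesis
    unfolding connected_component_def separator_restr_iff[OF assms] by blast
qed

lemma coeffs_vanish_outside_arc:
  assumes B: "indep B" "card B = k" "B \<subseteq> {0..<n}"
    and a: "a < n" and x: "x \<in> B" and z: "z < n" "z \<notin> B" "column z = lincomb c B" "c x \<noteq> 0"
    and BS: "BS \<subseteq> B" "\<And>b. b \<in> BS \<Longrightarrow> c b = 0"
      "\<And>b. b \<in> BS \<Longrightarrow> cyc_offset a n x < cyc_offset a n b \<and> cyc_offset a n b < cyc_offset a n z"
    and d: "d < n" "d \<notin> B" "cyc_offset a n d < cyc_offset a n x \<or> cyc_offset a n z < cyc_offset a n d"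
  shows "in_span (column d) (B - BS)"
proof -
  obtain e where e: "column d = lincomb e B"
    using in_span_basis[OF B(1,2)] unfolding in_span_def by blast
  have "e b = 0" if "b \<in> BS" for b
  proof (rule coeff_zero_by_nonneg_minors[OF B x _ _ z(1) d(1) z(2) d(2) _ z(3,4) BS(2)[OF that] e])
    show "b \<in> B" "x \<noteq> b" "z \<noteq> d"
      using that BS(1) BS(3)[OF that] d(3) by auto
    show "even ((if b < x then 1 else 0) + (if d < z then 1 else 0) + (if d < x then 1 else 0)
        + (if z < b then 1 else 0 :: nat))"
      using BS(1) BS(3)[OF that] B(3) x z(1) d a that
      by (intro cyc_offset_order_parity) auto
  qed
  then have "column d = lincomb e (B - BS)"
    using e lincomb_diff_zero_coeffs[OF indep_finite[OF B(1)] _ BS(1)] by simp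
  then show ?thesis
    unfolding in_span_def by blast
qed

lemma gap_is_separator:
  assumes a: "a < n" and I: "I = {e. e < n \<and> cyc_offset a n e < m}" and C: "indep_separator I C"
    and BC: "BC \<subseteq> C" "indep BC" "\<forall>c\<in>C. in_span (column c) BC"
    and xz: "x \<in> BC" "z \<in> C" "\<not> in_span (column z) (BC - {x})" "cyc_offset a n x < cyc_offset a n z"
  shows "indep_separator {0..<n}
    {s \<in> I - C. cyc_offset a n x < cyc_offset a n s \<and> cyc_offset a n s < cyc_offset a n z}"
    (is "indep_separator _ ?S")
proof -
  let ?p = "cyc_offset a n"
  have CI: "C \<subseteq> I"
    using C by (rule indep_separator_subset)
  have S: "?S \<subseteq> {0..<n}" "finite ?S" "?S \<subseteq> I - C"
    using I finite_subset[of ?S "{0..<n}"] by auto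
  obtain BS where BS: "BS \<subseteq> ?S" "indep BS" "\<forall>e\<in>?S. in_span (column e) BS"
    by (rule indep_extend_spanning[OF S(2) empty_subsetI indep_empty])
  have "indep (BC \<union> BS)"
    using indep_Un_if_separator[OF C BC(1) _ BC(2) BS(2)] BS(1) S(3) by blast
  moreover have "BC \<union> BS \<subseteq> {0..<n}"
    using BC(1) BS(1) CI S(1) I by auto
  ultimately obtain B where B: "BC \<union> BS \<subseteq> B" "B \<subseteq> {0..<n}" "card B = k" "indep B"
    using indep_extend_basis[OF full_rank] by blast
  have "z \<noteq> x"
    using xz(4) by auto
  moreover have "BC \<subseteq> B" "in_span (column z) BC"
    using B(1) BC(3) xz(2) by auto
  ultimately obtain c where c: "column z = lincomb c B" "c x \<noteq> 0" "\<forall>e\<in>B - BC. c e = 0" "z \<notin> B"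
    using coeffs_if_not_in_span_delete[OF B(4) _ xz(1) _ _ xz(3)] by blast
  have in_n: "x < n" "z < n"
    using xz(1,2) BC(1) CI I by auto
  have "in_span (column d) (B - BS)" if "d < n" "d \<notin> ?S" for d
  proof (cases "d \<in> C \<or> d \<in> B")
    case True
    have fin: "finite (B - BS)"
      using indep_finite[OF B(4)] by simp
    have "BC \<subseteq> B - BS"
      using B(1) BC(1) BS(1) S(3) by auto
    moreover have "d \<in> B - BS" if "d \<in> B"
      using that \<open>d \<notin> ?S\<close> BS(1) by auto
    ultimately show ?thesis
      using True BC(3) in_span_mono[OF fin] in_span_column[OF fin] by blast
  next
    case False
    have "d \<noteq> x" "d \<noteq> z"
      using False xz(1,2) BC(1) by auto
    then have "?p d \<noteq> ?p x" "?p d \<noteq> ?p z"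
      using cyc_offset_inj[OF a \<open>d < n\<close> in_n(1)] cyc_offset_inj[OF a \<open>d < n\<close> in_n(2)] by blast+
    moreover have "?p z < m"
      using xz(2) CI I by auto
    ultimately have "?p d < ?p x \<or> ?p z < ?p d"
      using that False I by auto
    moreover have "x \<in> B" "BS \<subseteq> B"
      using xz(1) B(1) BC(1) by auto
    moreover have "c b = 0" "?p x < ?p b \<and> ?p b < ?p z" if "b \<in> BS" for b
    proof -
      have "b \<in> B - BC"
        using that BS(1) B(1) BC(1) by auto
      then show "c b = 0"
        using c(3) by blast
      show "?p x < ?p b \<and> ?p b < ?p z"
        using that BS(1) by auto
    qed
    ultimately show ?thesis
      using coeffs_vanish_outside_arc[OF B(4,3,2) a _ in_n(2) c(4,1,2)] \<open>d < n\<close> False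
      by presburger
  qed
  moreover have "BS \<subseteq> B"
    using B(1) by blast
  ultimately show ?thesis
    using indep_separator_if_spans_split[OF B(4) _ S(1) BS(3)] by simp
qed

lemma component_is_cyclic_interval:
  assumes conn: "matroid_connected {0..<n} P" and I: "cyclic_interval n I"
    and C: "connected_component I (restr P I) C"
  shows "cyclic_interval n C"
proof (rule ccontr)
  assume "\<not> cyclic_interval n C"
  obtain a m where a: "a < n" and I_eq: "I = {e. e < n \<and> cyc_offset a n e < m}"
    by (rule cyclic_intervalE[OF I])
  let ?p = "cyc_offset a n"
  have In: "I \<subseteq> {0..<n}"
    using I_eq by auto
  then have "C \<noteq> {}" and C_sep: "indep_separator I C"
    and C_conn: "\<not> (\<exists>S. S \<noteq> {} \<and> S \<subset> C \<and> indep_separator C S)"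
    using C unfolding connected_component_iff[OF In] by blast+
  have CI: "C \<subseteq> I"
    using C_sep by (rule indep_separator_subset)
  with In have Cn: "C \<subseteq> {0..<n}"
    by (rule subset_trans[rotated])
  obtain t x0 z0 where t: "t < n" "t \<notin> C" and x0: "x0 \<in> C" "?p x0 < ?p t"
    and z0: "z0 \<in> C" "?p t < ?p z0"
    by (rule gap_if_not_cyclic_interval[OF a Cn \<open>C \<noteq> {}\<close> \<open>\<not> cyclic_interval n C\<close>])
  define Ca where "Ca = {c \<in> C. ?p c < ?p t}"
  have "Ca \<noteq> {}"
    using x0 unfolding Ca_def by blast
  moreover have "z0 \<notin> Ca"
    using z0(2) unfolding Ca_def by simp
  then have "Ca \<subset> C"
    using z0(1) unfolding Ca_def by blast
  ultimately have not_sep: "\<not> indep_separator C Ca"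
    using C_conn by blast
  have "finite C"
    using Cn by (rule finite_subset) simp
  moreover have "Ca \<subseteq> C"
    unfolding Ca_def by blast
  ultimately obtain BC x z where BC: "BC \<subseteq> C" "indep BC" "\<forall>c\<in>C. in_span (column c) BC"
    and x: "x \<in> BC \<inter> Ca" and z: "z \<in> C - Ca" "\<not> in_span (column z) (BC - {x})"
    using not_sep by (rule not_separator_exchange)
  let ?S = "{s \<in> I - C. ?p x < ?p s \<and> ?p s < ?p z}"
  have "z < n" "z \<noteq> t" "\<not> ?p z < ?p t"
    using z(1) t(2) Cn unfolding Ca_def by auto
  then have "?p t < ?p z"
    using cyc_offset_inj[OF a t(1)] by (metis linorder_neqE_nat)
  moreover have "?p x < ?p t"
    using x unfolding Ca_def by blast
  moreover have "t \<in> I"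
    using t(1) \<open>?p t < ?p z\<close> z(1) CI I_eq by auto
  ultimately have "t \<in> ?S"
    using t(2) by blast
  moreover have "?S \<subset> {0..<n}"
    using In x BC(1) Cn by blast
  moreover have "indep_separator {0..<n} ?S"
    using gap_is_separator[OF a I_eq C_sep BC] x z \<open>?p x < ?p t\<close> \<open>?p t < ?p z\<close> by simp
  ultimately have "\<exists>S. S \<noteq> {} \<and> S \<subset> {0..<n} \<and> indep_separator {0..<n} S"
    by (intro exI[of _ ?S]) blast
  then show False
    using conn connected_restr_iff[of "{0..<n}"] restr_matroid_ground by simp
qed

end

theorem lemma6p13:
  fixes n :: nat and P :: "nat set set" and I C :: "nat set"
  assumes "positroid n P"
    and "matroid_connected {0..<n} P"
    and "cyclic_interval n I"
    and "connected_component I (restr P I) C"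
  shows "cyclic_interval n C"
proof -
  obtain k A where "A \<in> carrier_mat k n" "vec_space.rank k A = k"
    "\<And>S. S \<subseteq> {0..<n} \<Longrightarrow> card S = k \<Longrightarrow> max_minor A S \<ge> 0" "P = matrix_matroid A"
    using assms(1) unfolding positroid_def by blast
  then interpret positroid_matrix A k n
    by unfold_locales
  show ?thesis
    using component_is_cyclic_interval assms(2-4) \<open>P = matrix_matroid A\<close> by blast
qed

end
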